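(* With the setup in the context, suppose $Q>2m$. Let $\varphi_1,\varphi_2$ be unit-norm eigenvectors of $H$ for its two largest eigenvalues $\lambda_1>\lambda_2$, with signs chosen so that $\varphi_1(v_1)\ge0$ and $\varphi_2(v_1)\ge0$. Then $$\varphi_1(v_1)\ \ge\ \sqrt{\tfrac12-\tfrac{m}{2Q^2}}-\sqrt{\tfrac{m}{Q-m}},\qquad \varphi_2(v_1)\ \ge\ \sqrt{\tfrac12-\tfrac{m}{2Q^2}}-\sqrt{\tfrac{m+1}{Q-m-1}}.$$
   Context: $G$ is a finite, simple, connected graph with vertex set $V$, maximum degree $m$, and an involution $\sigma$ (a bijection $V\to V$ with $\sigma\circ\sigma=\mathrm{id}$ such that $x\sim y$ implies $\sigma(x)\sim\sigma(y)$). Fix $v_1\in V$ with $v_1':=\sigma(v_1)\ne v_1$, and let $H=A_G+D_Q$ be the adjacency matrix of $G$ plus the diagonal potential matrix, with potential $Q$ at $v_1$ and $v_1'$ and $0$ elsewhere. For an eigenvector $\varphi$, $\varphi(x)$ denotes its entry at vertex $x$. *)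

theory Defs
  imports Complex_Main
begin

definition simple_graph :: "'a set \<Rightarrow> ('a \<Rightarrow> 'a \<Rightarrow> bool) \<Rightarrow> bool" where
  "simple_graph V E \<longleftrightarrow> finite V \<and> (\<forall>x y. E x y \<longrightarrow> x \<in> V \<and> y \<in> V)
     \<and> (\<forall>x y. E x y \<longrightarrow> E y x) \<and> (\<forall>x. \<not> E x x)"

definition connected_graph :: "'a set \<Rightarrow> ('a \<Rightarrow> 'a \<Rightarrow> bool) \<Rightarrow> bool" where
  "connected_graph V E \<longleftrightarrow> V \<noteq> {} \<and> (\<forall>x\<in>V. \<forall>y\<in>V. E\<^sup>*\<^sup>* x y)"

definition degree :: "'a set \<Rightarrow> ('a \<Rightarrow> 'a \<Rightarrow> bool) \<Rightarrow> 'a \<Rightarrow> nat" where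
  "degree V E x = card {y \<in> V. E x y}"

definition max_degree :: "'a set \<Rightarrow> ('a \<Rightarrow> 'a \<Rightarrow> bool) \<Rightarrow> nat" where
  "max_degree V E = Max (degree V E ` V)"

definition graph_involution :: "'a set \<Rightarrow> ('a \<Rightarrow> 'a \<Rightarrow> bool) \<Rightarrow> ('a \<Rightarrow> 'a) \<Rightarrow> bool" where
  "graph_involution V E \<sigma> \<longleftrightarrow> (\<forall>x\<in>V. \<sigma> x \<in> V \<and> \<sigma> (\<sigma> x) = x)
     \<and> (\<forall>x\<in>V. \<forall>y\<in>V. E x y \<longrightarrow> E (\<sigma> x) (\<sigma> y))"

text \<open>The operator H = A_G + D_Q acting on functions V \<rightarrow> real (values outside V are ignored);
  the potential Q sits on the vertices a and b (= v1 and sigma v1).\<close>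
definition Hop :: "'a set \<Rightarrow> ('a \<Rightarrow> 'a \<Rightarrow> bool) \<Rightarrow> real \<Rightarrow> 'a \<Rightarrow> 'a \<Rightarrow> ('a \<Rightarrow> real) \<Rightarrow> 'a \<Rightarrow> real" where
  "Hop V E Q a b \<phi> x = (\<Sum>y\<in>V. if E x y then \<phi> y else 0) + (if x = a \<or> x = b then Q * \<phi> x else 0)"

definition is_eigenvector :: "'a set \<Rightarrow> ('a \<Rightarrow> 'a \<Rightarrow> bool) \<Rightarrow> real \<Rightarrow> 'a \<Rightarrow> 'a \<Rightarrow> real \<Rightarrow> ('a \<Rightarrow> real) \<Rightarrow> bool" where
  "is_eigenvector V E Q a b lam \<phi> \<longleftrightarrow> (\<exists>x\<in>V. \<phi> x \<noteq> 0) \<and> (\<forall>x\<in>V. Hop V E Q a b \<phi> x = lam * \<phi> x)"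

definition is_eigenvalue :: "'a set \<Rightarrow> ('a \<Rightarrow> 'a \<Rightarrow> bool) \<Rightarrow> real \<Rightarrow> 'a \<Rightarrow> 'a \<Rightarrow> real \<Rightarrow> bool" where
  "is_eigenvalue V E Q a b lam \<longleftrightarrow> (\<exists>\<phi>. is_eigenvector V E Q a b lam \<phi>)"

definition unit_norm :: "'a set \<Rightarrow> ('a \<Rightarrow> real) \<Rightarrow> bool" where
  "unit_norm V \<phi> \<longleftrightarrow> (\<Sum>x\<in>V. (\<phi> x)\<^sup>2) = 1"

end

theory Submission
  imports "HOL-Analysis.Analysis" Defs
begin

text \<open>The top eigenvector \<phi>1 of H is a Perron vector: positive, and \<sigma>-symmetric because
  \<phi>1 - \<phi>1 \<circ> \<sigma> is a top eigenvector orthogonal to the positive vector \<phi>1 + \<phi>1 \<circ> \<sigma>.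
  Rayleigh quotients give lam1 \<ge> Q (test vector \<delta>_v1) and, after deflating \<phi>1, lam2 \<ge> Q - m
  (test vector \<delta>_v1 - \<delta>_\<sigma>v1, orthogonal to \<phi>1). As both eigenvalues exceed m, \<phi>2 must be
  antisymmetric at v1 and \<sigma> v1. Finally, the adjacency form is bounded by m times the squared
  norm, so a unit eigenvector with equal weight at v1 and \<sigma> v1 has eigenvalue at most
  m + 2 Q \<phi>(v1)^2; this gives \<phi>1(v1)^2 \<ge> 1/2 - m/(2Q) and \<phi>2(v1)^2 \<ge> 1/2 - m/Q, which are
  sharper than the stated bounds.\<close>

definition inner_on :: "'a set \<Rightarrow> ('a \<Rightarrow> real) \<Rightarrow> ('a \<Rightarrow> real) \<Rightarrow> real" where
  "inner_on V f g = (\<Sum>x\<in>V. f x * g x)"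

definition mat_apply :: "'a set \<Rightarrow> ('a \<Rightarrow> 'a \<Rightarrow> real) \<Rightarrow> ('a \<Rightarrow> real) \<Rightarrow> 'a \<Rightarrow> real" where
  "mat_apply V M f x = (\<Sum>y\<in>V. M x y * f y)"

definition quad_form :: "'a set \<Rightarrow> ('a \<Rightarrow> 'a \<Rightarrow> real) \<Rightarrow> ('a \<Rightarrow> real) \<Rightarrow> real" where
  "quad_form V M f = inner_on V f (mat_apply V M f)"

lemma quad_form_expand: "quad_form V M f = (\<Sum>x\<in>V. \<Sum>y\<in>V. M x y * f x * f y)"
  unfolding quad_form_def inner_on_def mat_apply_def by (simp add: sum_distrib_left algebra_simps)

lemma inner_on_commute: "inner_on V f g = inner_on V g f"
  unfolding inner_on_def by (simp add: mult.commute)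

lemma inner_on_self_nonneg: "0 \<le> inner_on V f f"
  unfolding inner_on_def by (simp add: sum_nonneg)

lemma inner_on_self_eq_0:
  assumes "finite V" "inner_on V f f = 0" "x \<in> V"
  shows "f x = 0"
  using assms sum_nonneg_eq_0_iff[of V "\<lambda>x. f x * f x"] unfolding inner_on_def by auto

lemma inner_on_self_eq_1_nonzero: "inner_on V f f = 1 \<Longrightarrow> \<exists>x\<in>V. f x \<noteq> 0"
  unfolding inner_on_def by (metis (no_types, lifting) mult_zero_left sum.neutral zero_neq_one)

lemma inner_on_cong:
  "(\<And>x. x \<in> V \<Longrightarrow> f x = f' x) \<Longrightarrow> (\<And>x. x \<in> V \<Longrightarrow> g x = g' x) \<Longrightarrow> inner_on V f g = inner_on V f' g'"
  unfolding inner_on_def by (intro sum.cong) auto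

lemma quad_form_cong: "(\<And>x. x \<in> V \<Longrightarrow> f x = g x) \<Longrightarrow> quad_form V M f = quad_form V M g"
  unfolding quad_form_expand by (intro sum.cong refl) auto

lemma inner_on_lincomb:
  "inner_on V (\<lambda>x. p * f x + q * g x) (\<lambda>x. r * f x + s * g x)
     = p * r * inner_on V f f + (p * s + q * r) * inner_on V f g + q * s * inner_on V g g"
  unfolding inner_on_def by (simp add: sum.distrib sum_distrib_left algebra_simps)

lemma inner_on_add_scaled:
  "inner_on V (\<lambda>x. f x + t * g x) (\<lambda>x. h x + t * k x)
     = inner_on V f h + t * inner_on V f k + t * inner_on V g h + t\<^sup>2 * inner_on V g k"
  unfolding inner_on_def by (simp add: sum.distrib sum_distrib_left power2_eq_square algebra_simps)

lemma inner_on_delta: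
  assumes "finite V" "a \<in> V"
  shows "inner_on V f (\<lambda>x. if x = a then 1 else 0) = f a"
  using assms by (simp add: inner_on_def if_distrib cong: if_cong)

lemma mat_apply_lincomb:
  "mat_apply V M (\<lambda>x. p * f x + q * g x) y = p * mat_apply V M f y + q * mat_apply V M g y"
  unfolding mat_apply_def by (simp add: sum.distrib sum_distrib_left algebra_simps)

lemma mat_apply_add_scaled:
  "mat_apply V M (\<lambda>x. f x + t * g x) y = mat_apply V M f y + t * mat_apply V M g y"
  unfolding mat_apply_def by (simp add: sum.distrib sum_distrib_left algebra_simps)

lemma mat_apply_add: "mat_apply V M (\<lambda>x. f x + g x) y = mat_apply V M f y + mat_apply V M g y"
  unfolding mat_apply_def by (simp add: sum.distrib algebra_simps)

lemma mat_apply_diff: "mat_apply V M (\<lambda>x. f x - g x) y = mat_apply V M f y - mat_apply V M g y"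
  unfolding mat_apply_def by (simp add: sum_subtractf algebra_simps)

lemma mat_apply_uminus: "mat_apply V M (\<lambda>x. - f x) y = - mat_apply V M f y"
  unfolding mat_apply_def by (simp add: sum_negf)

lemma quad_form_eigvec:
  "\<forall>x\<in>V. mat_apply V M g x = L * g x \<Longrightarrow> quad_form V M g = L * inner_on V g g"
  unfolding quad_form_def inner_on_def by (simp add: sum_distrib_left algebra_simps)

lemma rayleigh_max_exists:
  assumes fin: "finite V" and ne: "V \<noteq> {}"
  shows "\<exists>w. inner_on V w w = 1 \<and> (\<forall>f. quad_form V M f \<le> quad_form V M w * inner_on V f f)"
proof -
  define X where "X = product_topology (\<lambda>_. euclideanreal) V"
  define S where "S = {f \<in> topspace X. inner_on V f f \<in> {1}} \<inter> PiE V (\<lambda>_. {-1..1})"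
  have "continuous_map X euclideanreal (\<lambda>f. inner_on V f f)"
    unfolding inner_on_def X_def
    by (intro continuous_intros fin) (auto intro: continuous_map_product_projection)
  then have "closedin X {f \<in> topspace X. inner_on V f f \<in> {1}}"
    by (rule closedin_continuous_map_preimage) simp
  moreover have "compactin X (PiE V (\<lambda>_. {-1..1}))"
    unfolding X_def by (simp add: compactin_PiE)
  ultimately have "compactin X S" unfolding S_def by (rule closed_Int_compactin)
  moreover have "continuous_map X euclideanreal (quad_form V M)"
    unfolding quad_form_expand[abs_def] X_def
    by (intro continuous_intros fin) (auto intro: continuous_map_product_projection)
  ultimately have compact: "compact (quad_form V M ` S)" using image_compactin by fastforce
  have normalize_in_S: "restrict (\<lambda>x. f x / sqrt (inner_on V f f)) V \<in> S"
    if "inner_on V f f \<noteq> 0" for f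
  proof -
    define g where "g = restrict (\<lambda>x. f x / sqrt (inner_on V f f)) V"
    have g1: "inner_on V g g = 1"
      using that inner_on_self_nonneg[of V f]
      by (simp add: g_def inner_on_def sum_divide_distrib[symmetric] power2_eq_square[symmetric]
          power_divide)
    have "\<bar>g x\<bar> \<le> 1" if "x \<in> V" for x
    proof -
      have "g x * g x \<le> inner_on V g g"
        unfolding inner_on_def by (rule member_le_sum[OF that]) (auto simp: fin)
      then show ?thesis using g1 abs_le_square_iff[of "g x" 1] by (simp add: power2_eq_square)
    qed
    then have "g \<in> PiE V (\<lambda>_. {-1..1})"
      by (intro PiE_I) (auto simp: abs_le_iff, simp add: g_def)
    with g1 show ?thesis unfolding S_def X_def g_def by auto
  qed
  obtain x0 where x0: "x0 \<in> V" using ne by auto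
  have "inner_on V (\<lambda>x. if x = x0 then 1 else 0) (\<lambda>x. if x = x0 then 1 else 0) = 1"
    using inner_on_delta[OF fin x0] by simp
  then have "S \<noteq> {}" using normalize_in_S by force
  with compact obtain w where w: "w \<in> S" and w_max: "\<forall>g\<in>S. quad_form V M g \<le> quad_form V M w"
    using compact_attains_sup[of "quad_form V M ` S"] by auto
  have "quad_form V M f \<le> quad_form V M w * inner_on V f f" for f
  proof (cases "inner_on V f f = 0")
    case True
    then have "quad_form V M f = quad_form V M (\<lambda>_. 0)"
      using inner_on_self_eq_0[OF fin] by (intro quad_form_cong) auto
    with True show ?thesis by (simp add: quad_form_expand)
  next
    case False
    define n where "n = inner_on V f f"
    have n: "0 < n" using False inner_on_self_nonneg[of V f] by (simp add: n_def)
    have "quad_form V M f / n = quad_form V M (restrict (\<lambda>x. f x / sqrt n) V)"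
      using n by (simp add: quad_form_expand sum_divide_distrib algebra_simps)
    also have "\<dots> \<le> quad_form V M w" using w_max normalize_in_S[OF False] by (simp add: n_def)
    finally show ?thesis using n by (simp add: n_def divide_le_eq mult.commute)
  qed
  with w show ?thesis unfolding S_def by auto
qed

lemma linear_coeff_eq_0_if_quadratic_nonpos:
  fixes c d :: real
  assumes le: "\<And>t. 2 * t * c + t\<^sup>2 * d \<le> 0" and "0 \<le> c"
  shows "c = 0"
proof (rule ccontr)
  assume "c \<noteq> 0"
  with \<open>0 \<le> c\<close> have c: "0 < c" by simp
  define t where "t = c / (\<bar>d\<bar> + 1)"
  have t: "0 < t" using c by (simp add: t_def)
  have "t * \<bar>d\<bar> \<le> c"
    using c by (simp add: t_def divide_le_eq mult_left_mono mult.commute)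
  then have "t\<^sup>2 * \<bar>d\<bar> \<le> t * c" using t by (simp add: power2_eq_square mult.assoc)
  moreover have "- (t\<^sup>2 * \<bar>d\<bar>) \<le> t\<^sup>2 * d"
    using mult_left_mono[of "- \<bar>d\<bar>" d "t\<^sup>2"] by simp
  moreover have "0 < t * c" using t c by simp
  ultimately show False using le[of t] by linarith
qed

locale sym_matrix =
  fixes V :: "'a set" and M :: "'a \<Rightarrow> 'a \<Rightarrow> real"
  assumes finite_V: "finite V" and symmetric: "M x y = M y x"
begin

lemma inner_on_mat_apply_swap: "inner_on V f (mat_apply V M g) = inner_on V (mat_apply V M f) g"
proof -
  have "inner_on V f (mat_apply V M g) = (\<Sum>x\<in>V. \<Sum>y\<in>V. f x * M x y * g y)"
    unfolding inner_on_def mat_apply_def by (simp add: sum_distrib_left algebra_simps)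
  also have "\<dots> = (\<Sum>y\<in>V. \<Sum>x\<in>V. f x * M y x * g y)"
    by (subst sum.swap) (simp add: symmetric)
  also have "\<dots> = (\<Sum>y\<in>V. (\<Sum>x\<in>V. M y x * f x) * g y)"
    by (simp add: sum_distrib_right sum_distrib_left mult_ac)
  also have "\<dots> = inner_on V (mat_apply V M f) g"
    unfolding inner_on_def mat_apply_def ..
  finally show ?thesis .
qed

lemma eigvecs_orthogonal:
  assumes "\<forall>x\<in>V. mat_apply V M f x = \<mu> * f x" "\<forall>x\<in>V. mat_apply V M g x = \<nu> * g x" "\<mu> \<noteq> \<nu>"
  shows "inner_on V f g = 0"
proof -
  have "\<nu> * inner_on V f g = inner_on V f (mat_apply V M g)"
    using assms(2) by (simp add: inner_on_def sum_distrib_left algebra_simps)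
  also have "\<dots> = inner_on V (mat_apply V M f) g" by (rule inner_on_mat_apply_swap)
  also have "\<dots> = \<mu> * inner_on V f g"
    using assms(1) by (simp add: inner_on_def sum_distrib_left algebra_simps)
  finally show ?thesis using assms(3) by simp
qed

lemma quad_form_add_scaled:
  "quad_form V M (\<lambda>x. w x + t * z x)
     = quad_form V M w + 2 * t * inner_on V z (mat_apply V M w) + t\<^sup>2 * quad_form V M z"
proof -
  have "mat_apply V M (\<lambda>x. w x + t * z x) = (\<lambda>y. mat_apply V M w y + t * mat_apply V M z y)"
    by (rule ext) (rule mat_apply_add_scaled)
  then have "quad_form V M (\<lambda>x. w x + t * z x)
      = inner_on V (\<lambda>x. w x + t * z x) (\<lambda>y. mat_apply V M w y + t * mat_apply V M z y)"
    by (simp add: quad_form_def)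
  also have "\<dots> = inner_on V w (mat_apply V M w) + t * inner_on V w (mat_apply V M z)
      + t * inner_on V z (mat_apply V M w) + t\<^sup>2 * inner_on V z (mat_apply V M z)"
    by (rule inner_on_add_scaled)
  also have "inner_on V w (mat_apply V M z) = inner_on V z (mat_apply V M w)"
    using inner_on_mat_apply_swap inner_on_commute by metis
  finally show ?thesis unfolding quad_form_def by simp
qed

text \<open>First variation: perturbing a maximizer w of the Rayleigh quotient in the direction of its
  residual z = Mw - Rw raises the numerator at first order by 2t|z|^2, which forces z = 0.\<close>
lemma rayleigh_maximizer_eigvec:
  assumes le: "\<forall>f. quad_form V M f \<le> R * inner_on V f f"
    and eq: "quad_form V M w = R * inner_on V w w"
  shows "\<forall>x\<in>V. mat_apply V M w x = R * w x"
proof -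
  define z where "z x = mat_apply V M w x - R * w x" for x
  have "inner_on V z (mat_apply V M w) = inner_on V z (\<lambda>x. z x + R * w x)"
    by (simp add: z_def)
  also have "\<dots> = inner_on V z z + R * inner_on V z w"
    by (simp add: inner_on_def sum.distrib sum_distrib_left algebra_simps)
  finally have z_res: "inner_on V z (mat_apply V M w) = inner_on V z z + R * inner_on V z w" .
  have "2 * t * inner_on V z z + t\<^sup>2 * (quad_form V M z - R * inner_on V z z) \<le> 0" for t
  proof -
    have "quad_form V M (\<lambda>x. w x + t * z x) \<le> R * inner_on V (\<lambda>x. w x + t * z x) (\<lambda>x. w x + t * z x)"
      using le by blast
    then show ?thesis
      unfolding quad_form_add_scaled inner_on_lincomb[of V 1 w t z 1 t, simplified] z_res eq
      by (simp add: inner_on_commute[of V w z] algebra_simps power2_eq_square)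
  qed
  then have "inner_on V z z = 0"
    using linear_coeff_eq_0_if_quadratic_nonpos inner_on_self_nonneg by blast
  then show ?thesis using inner_on_self_eq_0[OF finite_V, of z] by (simp add: z_def)
qed

lemma top_eigvec_exists:
  assumes "V \<noteq> {}"
  obtains w R where "inner_on V w w = 1" "\<forall>x\<in>V. mat_apply V M w x = R * w x"
    "\<forall>f. quad_form V M f \<le> R * inner_on V f f"
proof -
  obtain w where w: "inner_on V w w = 1" and max: "\<forall>f. quad_form V M f \<le> quad_form V M w * inner_on V f f"
    using rayleigh_max_exists[OF finite_V assms] by blast
  moreover have "\<forall>x\<in>V. mat_apply V M w x = quad_form V M w * w x"
    using rayleigh_maximizer_eigvec[OF max] w by simp
  ultimately show ?thesis using that max by blast
qed

text \<open>Deflation: the top eigenvector of M - K \<phi> \<phi>^T is an eigenvector of M orthogonal to \<phi>,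
  once K is so large that L - K lies below the Rayleigh quotient of w.\<close>
lemma orthogonal_eigvec_ge_rayleigh:
  assumes eig: "\<forall>x\<in>V. mat_apply V M \<phi> x = L * \<phi> x" and unit: "inner_on V \<phi> \<phi> = 1"
    and orth: "inner_on V \<phi> w = 0" and w_pos: "0 < inner_on V w w"
  obtains v \<mu> where "\<exists>x\<in>V. v x \<noteq> 0" "inner_on V \<phi> v = 0"
    "\<forall>x\<in>V. mat_apply V M v x = \<mu> * v x" "quad_form V M w \<le> \<mu> * inner_on V w w"
proof -
  define K where "K = L - quad_form V M w / inner_on V w w + 1"
  define M' where "M' x y = M x y - K * \<phi> x * \<phi> y" for x y
  interpret deflated: sym_matrix V M'
    by unfold_locales (simp_all add: finite_V M'_def symmetric mult.commute)
  have apply': "mat_apply V M' f x = mat_apply V M f x - K * \<phi> x * inner_on V \<phi> f" for f x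
    unfolding mat_apply_def M'_def inner_on_def
    by (simp add: sum_subtractf sum_distrib_left algebra_simps)
  have "V \<noteq> {}" using w_pos by (auto simp: inner_on_def)
  then obtain v \<mu> where v: "inner_on V v v = 1" "\<forall>x\<in>V. mat_apply V M' v x = \<mu> * v x"
    and max': "\<forall>f. quad_form V M' f \<le> \<mu> * inner_on V f f"
    using deflated.top_eigvec_exists by blast
  have "quad_form V M' w = quad_form V M w"
    using orth by (simp add: quad_form_def apply' inner_on_def sum_subtractf)
  then have w_le: "quad_form V M w \<le> \<mu> * inner_on V w w" using max' by metis
  then have "quad_form V M w / inner_on V w w \<le> \<mu>" using w_pos by (simp add: divide_le_eq)
  then have "L - K < \<mu>" by (simp add: K_def)
  moreover have "\<forall>x\<in>V. mat_apply V M' \<phi> x = (L - K) * \<phi> x"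
    using eig unit by (simp add: apply' algebra_simps)
  ultimately have v_orth: "inner_on V \<phi> v = 0"
    using deflated.eigvecs_orthogonal v(2) by (metis order_less_irrefl)
  have "\<forall>x\<in>V. mat_apply V M v x = \<mu> * v x" using v(2) by (simp add: apply' v_orth)
  with that inner_on_self_eq_1_nonzero[OF v(1)] v_orth w_le show ?thesis by blast
qed

end

locale perron_matrix = sym_matrix +
  assumes nonneg: "0 \<le> M x y"
    and irreducible: "x \<in> V \<Longrightarrow> y \<in> V \<Longrightarrow> (\<lambda>x y. y \<in> V \<and> 0 < M x y)\<^sup>*\<^sup>* x y"
begin

lemma nonneg_eigvec_zero_everywhere:
  assumes eig: "\<forall>x\<in>V. mat_apply V M g x = L * g x" and g_nonneg: "\<forall>x\<in>V. 0 \<le> g x"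
    and "x0 \<in> V" "g x0 = 0" "x \<in> V"
  shows "g x = 0"
proof -
  have zero_step: "g z = 0" if "y \<in> V" "g y = 0" "z \<in> V" "0 < M y z" for y z
  proof -
    have "(\<Sum>z\<in>V. M y z * g z) = 0" using eig that(1,2) by (simp add: mat_apply_def)
    moreover have "\<forall>z\<in>V. 0 \<le> M y z * g z"
      using g_nonneg nonneg by (intro ballI mult_nonneg_nonneg) auto
    ultimately have "M y z * g z = 0"
      using sum_nonneg_eq_0_iff[OF finite_V, of "\<lambda>z. M y z * g z"] that(3) by blast
    with that(4) show ?thesis by simp
  qed
  have "(\<lambda>x y. y \<in> V \<and> 0 < M x y)\<^sup>*\<^sup>* x0 x" using irreducible assms(3,5) .
  then have "x \<in> V \<and> g x = 0"
  proof (induction rule: rtranclp_induct)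
    case base
    show ?case using assms(3,4) by simp
  next
    case (step y z)
    then show ?case using zero_step by blast
  qed
  then show ?thesis ..
qed

text \<open>Perron--Frobenius: |g| is again a maximizer of the Rayleigh quotient, so |g| + g is a
  nonnegative top eigenvector; being nonzero at x1, it vanishes nowhere.\<close>
lemma top_eigvec_pos:
  assumes top: "\<forall>f. quad_form V M f \<le> L * inner_on V f f"
    and eig: "\<forall>x\<in>V. mat_apply V M g x = L * g x" and "x1 \<in> V" "0 < g x1"
  shows "\<forall>x\<in>V. 0 < g x"
proof -
  define h where "h x = \<bar>g x\<bar>" for x
  have "inner_on V h h = inner_on V g g" by (simp add: inner_on_def h_def abs_mult[symmetric])
  then have "L * inner_on V h h = quad_form V M g" using quad_form_eigvec[OF eig] by simp
  also have "\<dots> \<le> quad_form V M h"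
    unfolding quad_form_expand h_def
  proof (intro sum_mono)
    fix x y
    have "M x y * (g x * g y) \<le> M x y * (\<bar>g x\<bar> * \<bar>g y\<bar>)"
      using nonneg by (intro mult_left_mono) (auto simp: abs_mult[symmetric])
    then show "M x y * g x * g y \<le> M x y * \<bar>g x\<bar> * \<bar>g y\<bar>" by (simp add: mult.assoc)
  qed
  finally have "quad_form V M h = L * inner_on V h h" using top[rule_format, of h] by linarith
  then have h_eig: "\<forall>x\<in>V. mat_apply V M h x = L * h x"
    by (rule rayleigh_maximizer_eigvec[OF top])
  have "\<forall>x\<in>V. mat_apply V M (\<lambda>x. h x + g x) x = L * (h x + g x)"
    using h_eig eig by (simp add: mat_apply_add algebra_simps)
  moreover have "\<forall>x\<in>V. 0 \<le> h x + g x" by (simp add: h_def abs_if)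
  ultimately have "h x + g x \<noteq> 0" if "x \<in> V" for x
    using nonneg_eigvec_zero_everywhere[of "\<lambda>x. h x + g x" L x x1] assms(3,4) that
    by (auto simp: h_def)
  then show ?thesis unfolding h_def by (metis abs_of_nonpos add.left_inverse not_less)
qed

lemma top_eigvec_definite:
  assumes top: "\<forall>f. quad_form V M f \<le> L * inner_on V f f"
    and eig: "\<forall>x\<in>V. mat_apply V M g x = L * g x" and "x1 \<in> V" "g x1 \<noteq> 0"
  shows "(\<forall>x\<in>V. 0 < g x) \<or> (\<forall>x\<in>V. g x < 0)"
proof (cases "0 < g x1")
  case True
  then show ?thesis using top_eigvec_pos[OF top eig \<open>x1 \<in> V\<close>] by blast
next
  case False
  have "\<forall>x\<in>V. mat_apply V M (\<lambda>x. - g x) x = L * - g x" using eig by (simp add: mat_apply_uminus)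
  with False assms(4) have "\<forall>x\<in>V. 0 < - g x"
    using top_eigvec_pos[OF top _ \<open>x1 \<in> V\<close>, of "\<lambda>x. - g x"] by simp
  then show ?thesis by auto
qed

lemma top_eigvec_orthogonal_to_pos:
  assumes top: "\<forall>f. quad_form V M f \<le> L * inner_on V f f"
    and eig: "\<forall>x\<in>V. mat_apply V M g x = L * g x"
    and p_pos: "\<forall>x\<in>V. 0 < p x" and orth: "inner_on V g p = 0" and "x \<in> V"
  shows "g x = 0"
proof (rule ccontr)
  assume "g x \<noteq> 0"
  with top_eigvec_definite[OF top eig \<open>x \<in> V\<close>] consider
    "\<forall>x\<in>V. 0 < g x" | "\<forall>x\<in>V. g x < 0" by blast
  then show False
  proof cases
    case 1
    then have "0 < inner_on V g p"
      unfolding inner_on_def using p_pos finite_V \<open>x \<in> V\<close> by (intro sum_pos) auto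
    with orth show False by simp
  next
    case 2
    then have "0 < inner_on V (\<lambda>x. - g x) p"
      unfolding inner_on_def using p_pos finite_V \<open>x \<in> V\<close>
      by (intro sum_pos) (auto simp: mult_neg_pos)
    with orth show False by (simp add: inner_on_def sum_negf)
  qed
qed

end

locale involutive_graph =
  fixes V :: "'a set" and E :: "'a \<Rightarrow> 'a \<Rightarrow> bool" and \<sigma> :: "'a \<Rightarrow> 'a" and Q :: real and a :: 'a
  assumes G_simple: "simple_graph V E" and G_connected: "connected_graph V E"
    and G_involution: "graph_involution V E \<sigma>"
    and a_in_V: "a \<in> V" and a_moved: "\<sigma> a \<noteq> a" and Q_nonneg: "0 \<le> Q"
begin

abbreviation b :: 'a where "b \<equiv> \<sigma> a"
abbreviation m :: nat where "m \<equiv> max_degree V E"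

definition H :: "'a \<Rightarrow> 'a \<Rightarrow> real" where
  "H x y = (if E x y then 1 else 0) + (if x = y \<and> (x = a \<or> x = b) then Q else 0)"

definition adj_form :: "('a \<Rightarrow> real) \<Rightarrow> real" where
  "adj_form f = (\<Sum>x\<in>V. \<Sum>y\<in>V. (if E x y then 1 else 0) * f x * f y)"

lemma finite_V: "finite V" and E_in_V: "E x y \<Longrightarrow> x \<in> V \<and> y \<in> V"
  and E_sym: "E x y \<longleftrightarrow> E y x" and E_irrefl: "\<not> E x x"
  using G_simple unfolding simple_graph_def by blast+

lemma \<sigma>_in_V: "x \<in> V \<Longrightarrow> \<sigma> x \<in> V" and \<sigma>_\<sigma>: "x \<in> V \<Longrightarrow> \<sigma> (\<sigma> x) = x"
  and E_\<sigma>: "x \<in> V \<Longrightarrow> y \<in> V \<Longrightarrow> E x y \<Longrightarrow> E (\<sigma> x) (\<sigma> y)"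
  using G_involution unfolding graph_involution_def by blast+

lemma b_in_V: "b \<in> V" using \<sigma>_in_V a_in_V .

sublocale perron_matrix V H
proof
  show "finite V" by (rule finite_V)
  show "H x y = H y x" for x y by (auto simp: H_def E_sym)
  show "0 \<le> H x y" for x y using Q_nonneg by (simp add: H_def)
  show "(\<lambda>x y. y \<in> V \<and> 0 < H x y)\<^sup>*\<^sup>* x y" if "x \<in> V" "y \<in> V" for x y
  proof -
    have "E\<^sup>*\<^sup>* x y" using G_connected that unfolding connected_graph_def by blast
    then show ?thesis
      by (rule rtranclp_mono[THEN predicate2D, rotated]) (auto simp: H_def E_in_V Q_nonneg add_pos_nonneg)
  qed
qed

lemma sum_diagonal_if:
  "x \<in> V \<Longrightarrow> (\<Sum>y\<in>V. if x = y \<and> P then c y else 0) = (if P then c x else 0)"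
  using finite_V by (cases P) auto

lemma Hop_eq_mat_apply:
  assumes "x \<in> V"
  shows "Hop V E Q a b f x = mat_apply V H f x"
proof -
  have "mat_apply V H f x
      = (\<Sum>y\<in>V. (if E x y then f y else 0) + (if x = y \<and> (x = a \<or> x = b) then Q * f y else 0))"
    unfolding mat_apply_def H_def by (intro sum.cong refl) (auto simp: algebra_simps E_irrefl)
  also have "\<dots> = Hop V E Q a b f x"
    unfolding sum.distrib Hop_def sum_diagonal_if[OF assms] ..
  finally show ?thesis ..
qed

lemma is_eigenvector_iff:
  "is_eigenvector V E Q a b L f \<longleftrightarrow> (\<exists>x\<in>V. f x \<noteq> 0) \<and> (\<forall>x\<in>V. mat_apply V H f x = L * f x)"
  unfolding is_eigenvector_def by (simp add: Hop_eq_mat_apply)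

lemma is_eigenvalueI:
  "\<exists>x\<in>V. f x \<noteq> 0 \<Longrightarrow> \<forall>x\<in>V. mat_apply V H f x = L * f x \<Longrightarrow> is_eigenvalue V E Q a b L"
  unfolding is_eigenvalue_def is_eigenvector_iff by blast

lemma quad_form_H: "quad_form V H f = adj_form f + Q * (f a)\<^sup>2 + Q * (f b)\<^sup>2"
proof -
  have "quad_form V H f = (\<Sum>x\<in>V. (\<Sum>y\<in>V. (if E x y then 1 else 0) * f x * f y)
      + (\<Sum>y\<in>V. if x = y \<and> (x = a \<or> x = b) then Q * f x * f y else 0))"
    unfolding quad_form_expand H_def sum.distrib[symmetric]
    by (intro sum.cong refl) (auto simp: algebra_simps)
  also have "\<dots> = (\<Sum>x\<in>V. (\<Sum>y\<in>V. (if E x y then 1 else 0) * f x * f y)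
      + (if x = a then Q * (f a)\<^sup>2 else 0) + (if x = b then Q * (f b)\<^sup>2 else 0))"
    using a_moved by (intro sum.cong refl, subst sum_diagonal_if) (auto simp: power2_eq_square)
  also have "\<dots> = adj_form f + Q * (f a)\<^sup>2 + Q * (f b)\<^sup>2"
    unfolding adj_form_def sum.distrib using finite_V a_in_V b_in_V by simp
  finally show ?thesis .
qed

lemma degree_le_max_degree: "x \<in> V \<Longrightarrow> degree V E x \<le> m"
  unfolding max_degree_def using finite_V by (intro Max_ge) auto

lemma adj_form_abs_le: "\<bar>adj_form f\<bar> \<le> m * inner_on V f f"
proof -
  let ?e = "\<lambda>x y. if E x y then 1 else 0 :: real"
  have "\<bar>adj_form f\<bar> \<le> (\<Sum>x\<in>V. \<Sum>y\<in>V. ?e x y * \<bar>f x\<bar> * \<bar>f y\<bar>)"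
    unfolding adj_form_def
    by (rule order_trans[OF sum_abs], rule sum_mono, rule order_trans[OF sum_abs]) (auto simp: abs_mult)
  also have "\<dots> \<le> (\<Sum>x\<in>V. \<Sum>y\<in>V. ?e x y * ((f x)\<^sup>2 + (f y)\<^sup>2) / 2)"
  proof (intro sum_mono)
    fix x y
    have "2 * (\<bar>f x\<bar> * \<bar>f y\<bar>) \<le> (f x)\<^sup>2 + (f y)\<^sup>2"
      using sum_squares_bound[of "\<bar>f x\<bar>" "\<bar>f y\<bar>"] by simp
    then show "?e x y * \<bar>f x\<bar> * \<bar>f y\<bar> \<le> ?e x y * ((f x)\<^sup>2 + (f y)\<^sup>2) / 2" by auto
  qed
  also have "\<dots> = ((\<Sum>x\<in>V. \<Sum>y\<in>V. ?e x y * (f x)\<^sup>2) + (\<Sum>x\<in>V. \<Sum>y\<in>V. ?e x y * (f y)\<^sup>2)) / 2"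
    by (simp only: distrib_left sum.distrib[symmetric] sum_divide_distrib)
  also have "(\<Sum>x\<in>V. \<Sum>y\<in>V. ?e x y * (f y)\<^sup>2) = (\<Sum>x\<in>V. \<Sum>y\<in>V. ?e x y * (f x)\<^sup>2)"
    by (subst sum.swap) (simp add: E_sym)
  also have "(\<Sum>x\<in>V. \<Sum>y\<in>V. ?e x y * (f x)\<^sup>2) = (\<Sum>x\<in>V. real (degree V E x) * (f x)\<^sup>2)"
    by (simp add: sum_distrib_right[symmetric] degree_def finite_V sum.inter_filter[symmetric])
  also have "\<dots> \<le> (\<Sum>x\<in>V. real m * (f x)\<^sup>2)"
    by (intro sum_mono mult_right_mono) (auto simp: degree_le_max_degree)
  finally show ?thesis by (simp add: inner_on_def sum_distrib_left[symmetric] power2_eq_square)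
qed

lemma max_degree_pos: "1 \<le> m"
proof -
  have "E\<^sup>*\<^sup>* a b" using G_connected a_in_V b_in_V unfolding connected_graph_def by blast
  then obtain y where "E a y" using a_moved by (auto elim: converse_rtranclpE)
  then have "0 < degree V E a"
    unfolding degree_def using finite_V E_in_V by (auto simp: card_gt_0_iff)
  then show ?thesis using degree_le_max_degree[OF a_in_V] by simp
qed

lemma E_\<sigma>_iff: "x \<in> V \<Longrightarrow> y \<in> V \<Longrightarrow> E (\<sigma> x) (\<sigma> y) \<longleftrightarrow> E x y"
  using E_\<sigma>[of "\<sigma> x" "\<sigma> y"] E_\<sigma>[of x y] \<sigma>_\<sigma> \<sigma>_in_V by auto

lemma H_\<sigma>: "x \<in> V \<Longrightarrow> y \<in> V \<Longrightarrow> H (\<sigma> x) (\<sigma> y) = H x y"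
  unfolding H_def using \<sigma>_\<sigma> a_in_V by (simp add: E_\<sigma>_iff) metis

lemma mat_apply_H_comp_\<sigma>: "x \<in> V \<Longrightarrow> mat_apply V H (\<lambda>y. f (\<sigma> y)) x = mat_apply V H f (\<sigma> x)"
  unfolding mat_apply_def
  using sum.reindex_bij_betw[OF bij_betw_byWitness[of V \<sigma> \<sigma> V], of "\<lambda>y. H (\<sigma> x) y * f y"]
  by (simp add: H_\<sigma> \<sigma>_\<sigma> \<sigma>_in_V image_subset_iff cong: sum.cong)

lemma inner_on_comp_\<sigma>: "inner_on V (\<lambda>x. f (\<sigma> x)) (\<lambda>x. g (\<sigma> x)) = inner_on V f g"
  unfolding inner_on_def
  using sum.reindex_bij_betw[OF bij_betw_byWitness[of V \<sigma> \<sigma> V], of "\<lambda>x. f x * g x"]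
  by (simp add: \<sigma>_\<sigma> \<sigma>_in_V image_subset_iff)

lemma quad_form_H_le_if_vanishes_at_ab:
  "f a = 0 \<Longrightarrow> f b = 0 \<Longrightarrow> quad_form V H f \<le> m * inner_on V f f"
  using adj_form_abs_le[of f] by (simp add: quad_form_H)

lemma eigval_le_by_entry_at_a:
  assumes "\<forall>x\<in>V. mat_apply V H g x = L * g x" "inner_on V g g = 1" "(g b)\<^sup>2 = (g a)\<^sup>2"
  shows "L \<le> m + 2 * Q * (g a)\<^sup>2"
proof -
  have "L = adj_form g + Q * (g a)\<^sup>2 + Q * (g b)\<^sup>2"
    using quad_form_eigvec[OF assms(1)] assms(2) by (simp add: quad_form_H)
  moreover have "adj_form g \<le> m" using adj_form_abs_le[of g] assms(2) by simp
  ultimately show ?thesis using assms(3) by simp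
qed

end

locale top_two_eigenpairs = involutive_graph +
  fixes lam1 lam2 :: real and \<phi>1 \<phi>2 :: "'a \<Rightarrow> real"
  assumes Q_gt: "2 * real m < Q"
    and lam1_max: "is_eigenvalue V E Q a b \<mu> \<Longrightarrow> \<mu> \<le> lam1"
    and lam2_less: "lam2 < lam1"
    and lam2_max: "is_eigenvalue V E Q a b \<mu> \<Longrightarrow> \<mu> < lam1 \<Longrightarrow> \<mu> \<le> lam2"
    and \<phi>1: "is_eigenvector V E Q a b lam1 \<phi>1" "unit_norm V \<phi>1"
    and \<phi>2: "is_eigenvector V E Q a b lam2 \<phi>2" "unit_norm V \<phi>2"
    and \<phi>1_a_nonneg: "0 \<le> \<phi>1 a"
begin

lemma eig1: "\<forall>x\<in>V. mat_apply V H \<phi>1 x = lam1 * \<phi>1 x"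
  and eig2: "\<forall>x\<in>V. mat_apply V H \<phi>2 x = lam2 * \<phi>2 x"
  using \<phi>1(1) \<phi>2(1) by (simp_all add: is_eigenvector_iff)

lemma unit1: "inner_on V \<phi>1 \<phi>1 = 1" and unit2: "inner_on V \<phi>2 \<phi>2 = 1"
  using \<phi>1(2) \<phi>2(2) by (simp_all add: unit_norm_def inner_on_def power2_eq_square)

lemma rayleigh_le_lam1: "\<forall>f. quad_form V H f \<le> lam1 * inner_on V f f"
proof -
  obtain w R where "inner_on V w w = 1" "\<forall>x\<in>V. mat_apply V H w x = R * w x"
    and top: "\<forall>f. quad_form V H f \<le> R * inner_on V f f"
    using top_eigvec_exists a_in_V by blast
  then have "R \<le> lam1" using lam1_max is_eigenvalueI inner_on_self_eq_1_nonzero by blast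
  then show ?thesis
    using top inner_on_self_nonneg by (meson mult_right_mono order_trans)
qed

lemma Q_le_lam1: "Q \<le> lam1"
proof -
  define \<delta> where "\<delta> = (\<lambda>x. if x = a then 1 else 0 :: real)"
  have "adj_form \<delta> = 0" unfolding adj_form_def \<delta>_def by (intro sum.neutral ballI) (auto simp: E_irrefl)
  then have "quad_form V H \<delta> = Q" using a_moved by (simp add: quad_form_H \<delta>_def)
  moreover have "inner_on V \<delta> \<delta> = 1" using inner_on_delta[OF finite_V a_in_V] by (simp add: \<delta>_def)
  ultimately show ?thesis using rayleigh_le_lam1 by (metis mult.right_neutral)
qed

lemma \<phi>1_pos: "\<forall>x\<in>V. 0 < \<phi>1 x"
proof -
  obtain x1 where "x1 \<in> V" "\<phi>1 x1 \<noteq> 0" using \<phi>1(1) is_eigenvector_iff by blast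
  from top_eigvec_definite[OF rayleigh_le_lam1 eig1 this] show ?thesis
    using \<phi>1_a_nonneg a_in_V by fastforce
qed

text \<open>\<phi>1 - \<phi>1 \<circ> \<sigma> is a top eigenvector orthogonal to the positive vector \<phi>1 + \<phi>1 \<circ> \<sigma>,
  because \<sigma> preserves the norm.\<close>
lemma \<phi>1_b: "\<phi>1 b = \<phi>1 a"
proof -
  define \<psi> where "\<psi> = (\<lambda>x. \<phi>1 (\<sigma> x))"
  have eig\<psi>: "\<forall>x\<in>V. mat_apply V H \<psi> x = lam1 * \<psi> x"
    using eig1 by (simp add: \<psi>_def mat_apply_H_comp_\<sigma> \<sigma>_in_V)
  have "inner_on V (\<lambda>x. \<phi>1 x - \<psi> x) (\<lambda>x. \<phi>1 x + \<psi> x) = inner_on V \<phi>1 \<phi>1 - inner_on V \<psi> \<psi>"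
    by (simp add: inner_on_def sum_subtractf algebra_simps)
  also have "\<dots> = 0" unfolding \<psi>_def inner_on_comp_\<sigma> by simp
  finally have orth: "inner_on V (\<lambda>x. \<phi>1 x - \<psi> x) (\<lambda>x. \<phi>1 x + \<psi> x) = 0" .
  have "\<forall>x\<in>V. mat_apply V H (\<lambda>x. \<phi>1 x - \<psi> x) x = lam1 * (\<phi>1 x - \<psi> x)"
    using eig1 eig\<psi> by (simp add: mat_apply_diff right_diff_distrib)
  moreover have "\<forall>x\<in>V. 0 < \<phi>1 x + \<psi> x" using \<phi>1_pos \<sigma>_in_V by (simp add: \<psi>_def add_pos_pos)
  ultimately have "\<phi>1 a - \<psi> a = 0"
    using top_eigvec_orthogonal_to_pos[OF rayleigh_le_lam1 _ _ orth a_in_V] by simp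
  then show ?thesis by (simp add: \<psi>_def)
qed

text \<open>The test vector \<delta>_a - \<delta>_b is orthogonal to \<phi>1 by symmetry and has Rayleigh quotient
  at least Q - m; deflation turns it into an eigenvalue, which must be lam2 or smaller because
  every top eigenvector is definite and hence not orthogonal to \<phi>1.\<close>
lemma lam2_ge: "Q - m \<le> lam2"
proof -
  define w where "w x = (if x = a then 1 else 0) - (if x = b then 1 else 0 :: real)" for x
  have "inner_on V \<phi>1 w
      = inner_on V \<phi>1 (\<lambda>x. if x = a then 1 else 0) - inner_on V \<phi>1 (\<lambda>x. if x = b then 1 else 0)"
    unfolding inner_on_def w_def by (simp add: right_diff_distrib sum_subtractf)
  then have w_orth: "inner_on V \<phi>1 w = 0"
    using \<phi>1_b by (simp add: inner_on_delta finite_V a_in_V b_in_V)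
  have "inner_on V w w
      = inner_on V (\<lambda>_. 1) (\<lambda>x. if x = a then 1 else 0) + inner_on V (\<lambda>_. 1) (\<lambda>x. if x = b then 1 else 0)"
    unfolding inner_on_def w_def sum.distrib[symmetric] by (rule sum.cong) (use a_moved in auto)
  then have w_norm: "inner_on V w w = 2" by (simp add: inner_on_delta finite_V a_in_V b_in_V)
  have "quad_form V H w = adj_form w + 2 * Q" using a_moved by (simp add: quad_form_H w_def)
  moreover have "- (2 * m) \<le> adj_form w" using adj_form_abs_le[of w] w_norm by simp
  ultimately have w_quad: "2 * (Q - m) \<le> quad_form V H w" by simp
  obtain v \<mu> where v: "\<exists>x\<in>V. v x \<noteq> 0" "inner_on V \<phi>1 v = 0"
    "\<forall>x\<in>V. mat_apply V H v x = \<mu> * v x" and \<mu>: "quad_form V H w \<le> \<mu> * inner_on V w w"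
    using orthogonal_eigvec_ge_rayleigh[OF eig1 unit1 w_orth] w_norm by auto
  have "\<mu> \<noteq> lam1"
  proof
    assume "\<mu> = lam1"
    moreover have "inner_on V v \<phi>1 = 0" using v(2) inner_on_commute by metis
    ultimately have "\<forall>x\<in>V. v x = 0"
      using top_eigvec_orthogonal_to_pos[OF rayleigh_le_lam1 _ \<phi>1_pos] v(3) by auto
    with v(1) show False by blast
  qed
  with lam1_max[OF is_eigenvalueI[OF v(1,3)]] have "\<mu> \<le> lam2"
    using lam2_max[OF is_eigenvalueI[OF v(1,3)]] by simp
  with w_quad \<mu> w_norm show ?thesis by simp
qed

text \<open>With \<xi> = \<phi>2 + \<phi>2 \<circ> \<sigma> and \<beta> = \<xi> a = \<xi> b, the combination u = \<phi>1(a) \<xi> - \<beta> \<phi>1 vanishes at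
  a and b, so its Rayleigh quotient is at most m; but \<xi> and \<phi>1 are orthogonal eigenvectors
  with eigenvalues above m, which forces \<beta> = 0.\<close>
lemma \<phi>2_b: "\<phi>2 b = - \<phi>2 a"
proof -
  define \<xi> where "\<xi> = (\<lambda>x. \<phi>2 x + \<phi>2 (\<sigma> x))"
  define \<beta> where "\<beta> = \<phi>2 a + \<phi>2 b"
  define c where "c = \<phi>1 a"
  define u where "u = (\<lambda>x. c * \<xi> x + (- \<beta>) * \<phi>1 x)"
  have eig\<xi>: "\<forall>x\<in>V. mat_apply V H \<xi> x = lam2 * \<xi> x"
    using eig2 by (simp add: \<xi>_def mat_apply_add mat_apply_H_comp_\<sigma> \<sigma>_in_V distrib_left)
  have orth: "inner_on V \<xi> \<phi>1 = 0" using eigvecs_orthogonal[OF eig\<xi> eig1] lam2_less by simp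
  have "u a = 0" "u b = 0" using \<sigma>_\<sigma>[OF a_in_V] \<phi>1_b by (simp_all add: u_def \<xi>_def \<beta>_def c_def algebra_simps)
  then have "quad_form V H u \<le> m * inner_on V u u" by (rule quad_form_H_le_if_vanishes_at_ab)
  moreover have "quad_form V H u = inner_on V u (\<lambda>x. (c * lam2) * \<xi> x + (- \<beta> * lam1) * \<phi>1 x)"
    unfolding quad_form_def using mat_apply_lincomb[of V H c \<xi> "- \<beta>" \<phi>1] eig\<xi> eig1
    by (intro inner_on_cong) (simp_all add: u_def)
  then have "quad_form V H u = c\<^sup>2 * lam2 * inner_on V \<xi> \<xi> + \<beta>\<^sup>2 * lam1"
    unfolding u_def inner_on_lincomb by (simp add: orth unit1 power2_eq_square)
  moreover have "inner_on V u u = c\<^sup>2 * inner_on V \<xi> \<xi> + \<beta>\<^sup>2"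
    unfolding u_def inner_on_lincomb by (simp add: orth unit1 power2_eq_square)
  ultimately have "c\<^sup>2 * inner_on V \<xi> \<xi> * (lam2 - m) + \<beta>\<^sup>2 * (lam1 - m) \<le> 0"
    by (simp add: algebra_simps)
  moreover have "0 \<le> c\<^sup>2 * inner_on V \<xi> \<xi> * (lam2 - m)"
    using lam2_ge Q_gt inner_on_self_nonneg[of V \<xi>] by simp
  moreover have "0 < lam1 - m" using Q_le_lam1 Q_gt by simp
  ultimately have "\<beta>\<^sup>2 \<le> 0" by (smt (verit) mult_le_0_iff)
  then show ?thesis by (simp add: \<beta>_def)
qed

lemma \<phi>1_a_bound: "Q \<le> m + 2 * Q * (\<phi>1 a)\<^sup>2"
  using eigval_le_by_entry_at_a[OF eig1 unit1] Q_le_lam1 \<phi>1_b by simp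

lemma \<phi>2_a_bound: "Q - m \<le> m + 2 * Q * (\<phi>2 a)\<^sup>2"
  using eigval_le_by_entry_at_a[OF eig2 unit2] lam2_ge \<phi>2_b by simp

end

lemma sqrt_diff_le_of_sq_ge:
  fixes x y z w :: real
  assumes "0 \<le> x" "y \<le> x\<^sup>2" "0 \<le> y" "0 \<le> z" "w \<le> y + z"
  shows "sqrt w - sqrt z \<le> x"
proof -
  have "sqrt y \<le> x" using assms(1,2) real_le_lsqrt by blast
  moreover have "sqrt w \<le> sqrt (y + z)" using assms(5) by simp
  moreover have "sqrt (y + z) \<le> sqrt y + sqrt z" using sqrt_add_le_add_sqrt assms(3,4) by blast
  ultimately show ?thesis by linarith
qed

lemma top_entry_numeric_bound:
  fixes x Q m :: real
  assumes "2 * m < Q" "0 \<le> m" "0 \<le> x" "Q \<le> m + 2 * Q * x\<^sup>2"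
  shows "sqrt (1/2 - m / (2 * Q\<^sup>2)) - sqrt (m / (Q - m)) \<le> x"
proof (rule sqrt_diff_le_of_sq_ge[OF \<open>0 \<le> x\<close>])
  have Q: "0 < Q" "0 < Q - m" using assms(1,2) by auto
  show "1/2 - m / (2 * Q) \<le> x\<^sup>2" using assms(4) Q by (simp add: field_simps)
  show "0 \<le> 1/2 - m / (2 * Q)" using assms(1) Q by (simp add: field_simps)
  show "0 \<le> m / (Q - m)" using Q assms(2) by simp
  have "m / (2 * Q) \<le> m / (Q - m)" using Q assms(2) by (intro divide_left_mono) auto
  moreover have "0 \<le> m / (2 * Q\<^sup>2)" using assms(2) by simp
  ultimately show "1/2 - m / (2 * Q\<^sup>2) \<le> 1/2 - m / (2 * Q) + m / (Q - m)" by linarith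
qed

lemma second_entry_numeric_bound:
  fixes x Q m :: real
  assumes "2 * m < Q" "1 \<le> m" "0 \<le> x" "Q - m \<le> m + 2 * Q * x\<^sup>2"
  shows "sqrt (1/2 - m / (2 * Q\<^sup>2)) - sqrt ((m + 1) / (Q - m - 1)) \<le> x"
proof (rule sqrt_diff_le_of_sq_ge[OF \<open>0 \<le> x\<close>])
  have Q: "0 < Q" "0 < Q - m - 1" using assms(1,2) by auto
  show "1/2 - m / Q \<le> x\<^sup>2" using assms(4) Q by (simp add: field_simps)
  show "0 \<le> 1/2 - m / Q" using assms(1) Q by (simp add: field_simps)
  show "0 \<le> (m + 1) / (Q - m - 1)" using Q assms(2) by simp
  have "m * (Q - m - 1) \<le> (m + 1) * Q" using Q assms(2) by (simp add: algebra_simps)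
  then have "m / Q \<le> (m + 1) / (Q - m - 1)" using Q by (simp add: divide_simps)
  moreover have "0 \<le> m / (2 * Q\<^sup>2)" using assms(2) by simp
  ultimately show "1/2 - m / (2 * Q\<^sup>2) \<le> 1/2 - m / Q + (m + 1) / (Q - m - 1)" by linarith
qed

theorem theorem6:
  fixes V :: "'a set" and E :: "'a \<Rightarrow> 'a \<Rightarrow> bool" and \<sigma> :: "'a \<Rightarrow> 'a"
    and v1 :: 'a and Q lam1 lam2 :: real and \<phi>1 \<phi>2 :: "'a \<Rightarrow> real"
  assumes "simple_graph V E" and "connected_graph V E"
    and "graph_involution V E \<sigma>"
    and "v1 \<in> V" and "\<sigma> v1 \<noteq> v1"
    and "Q > 2 * real (max_degree V E)"
    and "is_eigenvalue V E Q v1 (\<sigma> v1) lam1"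
    and "\<forall>\<mu>. is_eigenvalue V E Q v1 (\<sigma> v1) \<mu> \<longrightarrow> \<mu> \<le> lam1"
    and "is_eigenvalue V E Q v1 (\<sigma> v1) lam2" and "lam2 < lam1"
    and "\<forall>\<mu>. is_eigenvalue V E Q v1 (\<sigma> v1) \<mu> \<and> \<mu> < lam1 \<longrightarrow> \<mu> \<le> lam2"
    and "is_eigenvector V E Q v1 (\<sigma> v1) lam1 \<phi>1" and "unit_norm V \<phi>1"
    and "is_eigenvector V E Q v1 (\<sigma> v1) lam2 \<phi>2" and "unit_norm V \<phi>2"
    and "\<phi>1 v1 \<ge> 0" and "\<phi>2 v1 \<ge> 0"
  shows "\<phi>1 v1 \<ge> sqrt (1/2 - real (max_degree V E) / (2 * Q\<^sup>2))
                    - sqrt (real (max_degree V E) / (Q - real (max_degree V E)))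
    \<and> \<phi>2 v1 \<ge> sqrt (1/2 - real (max_degree V E) / (2 * Q\<^sup>2))
                    - sqrt ((real (max_degree V E) + 1) / (Q - real (max_degree V E) - 1))"
proof -
  interpret top_two_eigenpairs V E \<sigma> Q v1 lam1 lam2 \<phi>1 \<phi>2
    by unfold_locales (use assms in auto)
  show ?thesis
    using top_entry_numeric_bound[OF Q_gt _ \<open>\<phi>1 v1 \<ge> 0\<close> \<phi>1_a_bound]
      second_entry_numeric_bound[OF Q_gt _ \<open>\<phi>2 v1 \<ge> 0\<close> \<phi>2_a_bound] max_degree_pos
    by simp
qed

end
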